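(* Let $\xi=(\omega,\gamma,\mu,c)$ be a normalized quasi-abelian 3-cocycle on a finite crossed module $(G,X,\partial)$. The braided fusion category $\mathcal{C}(\xi)^G$ is nondegenerate if and only if the homomorphism $\partial$ is surjective and $\xi$ is nondegenerate.
   Context: $\mathbb{K}$ is an algebraically closed field of characteristic $0$. A finite crossed module is a triple $(G,X,\partial)$ with $G,X$ finite groups, $G$ acting on $X$ by automorphisms $(g,x)\mapsto {}^{g}x$, and $\partial:X\to G$ a homomorphism with ${}^{\partial(x)}x'=xx'x^{-1}$ and $\partial({}^gx)=g\partial(x)g^{-1}$. A quasi-abelian 3-cocycle on it is a quadruple $\xi=(\omega,\gamma,\mu,c)$ of functions $\omega:X^3\to\mathbb{K}^\times$, $(g,h,x)\mapsto\gamma_{g,h}(x)$ on $G\times G\times X$, $(g,x,y)\mapsto\mu_g(x,y)$ on $G\times X\times X$, $c:X^2\to\mathbb{K}^\times$, such that for all $g,h,k\in G$, $w,x,y,z\in X$: (a) $\omega(x,y,z)\omega(w,xy,z)\omega(w,x,y)=\omega(w,x,yz)\omega(wx,y,z)$; (b) $\gamma_{h,k}(x)\gamma_{g,hk}(x)=\gamma_{gh,k}(x)\gamma_{g,h}({}^kx)$; (c) $\frac{\mu_g(y,z)\mu_g(x,yz)}{\mu_g(xy,z)\mu_g(x,y)}=\frac{\omega({}^gx,{}^gy,{}^gz)}{\omega(x,y,z)}$; (d) $\frac{\gamma_{g,h}(x)\gamma_{g,h}(y)}{\gamma_{g,h}(xy)}=\frac{\mu_g({}^hx,{}^hy)\mu_h(x,y)}{\mu_{gh}(x,y)}$;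 (e) $\frac{c({}^gx,{}^gy)}{c(x,y)}=\frac{\mu_g(xyx^{-1},x)}{\mu_g(x,y)}\cdot\frac{\gamma_{g\partial(x)g^{-1},g}(y)}{\gamma_{g,\partial(x)}(y)}$; (f) $c(xy,z)=\frac{\omega(x,y,z)\,\omega((xy)z(xy)^{-1},x,y)}{\omega(x,yzy^{-1},y)\,\gamma_{\partial(x),\partial(y)}(z)}\,c(x,yzy^{-1})\,c(y,z)$; (g) $c(x,yz)=\frac{\omega(xyx^{-1},x,z)}{\omega(x,y,z)\,\omega(xyx^{-1},xzx^{-1},x)\,\mu_{\partial(x)}(y,z)}\,c(x,y)\,c(x,z)$. It is normalized if $\omega(x,y,z)=1$ whenever one of $x,y,z$ is $e$, $\gamma_{g,h}(x)=1$ whenever one of $g,h,x$ is $e$, $\mu_g(x,y)=1$ whenever one of $g,x,y$ is $e$, and $c(x,y)=1$ whenever $x$ or $y$ is $e$. A normalized $\xi$ is nondegenerate if the symmetric bicharacter $\mathrm{Ker}\,\partial\times\mathrm{Ker}\,\partial\to\mathbb{K}^\times$, $(x,y)\mapsto c(y,x)c(x,y)$, on the abelian group $\mathrm{Ker}\,\partial$ is nondegenerate. $\mathcal{C}(\xi)$ denotes the fusion category $\mathrm{Vec}_X^\omega$ of finite-dimensional $X$-graded vector spaces (tensor product $\otimes_\mathbb{K}$ with degrees multiplied, associativity $(u\otimes v)\otimes w\mapsto\omega(x,y,z)u\otimes(v\otimes w)$ for homogeneous $u,v,w$ of degrees $x,y,z$) with: the $G$-grading with $\mathcal{C}_g$ the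 objects supported on $\partial^{-1}(g)$; functors $T_g$ sending homogeneous $V$ of degree $x$ to the same space in degree ${}^gx$; and for homogeneous $V,W$ of degrees $x,y$ the isomorphisms $\tilde\gamma_{g,h}(V)=\gamma_{g,h}(x)\mathrm{id}_V:T_{gh}(V)\to T_gT_h(V)$, $\tilde\mu_g(V,W)=\mu_g(x,y)\mathrm{id}:T_g(V\otimes W)\to T_gV\otimes T_gW$, $\tilde c(V,W)=c(x,y)\tau_{V,W}:V\otimes W\to T_{\partial(x)}(W)\otimes V$ ($\tau$ the flip). The equivariantization $\mathcal{C}(\xi)^G$ is the braided fusion category of pairs $(V,\{u_g\})$, $u_g:T_g(V)\to V$ isomorphisms with $u_{gh}=u_g\circ T_g(u_h)\circ\tilde\gamma_{g,h}(V)$; morphisms commute with the $u_g$; tensor product $(V\otimes V',\{(u_g\otimes u'_g)\circ\tilde\mu_g(V,V')\})$; associativity from $\mathrm{Vec}_X^\omega$; braiding given on $V_g\otimes V'$ ($V_g$ the component of $V$ in $\mathcal{C}_g$) by $(u'_g\otimes\mathrm{id})\circ\tilde c(V_g,V')$. A braided fusion category is nondegenerate if the only objects $Y$ with $c_{Y,Z}\circ c_{Z,Y}=\mathrm{id}$ and $c_{Z,Y}\circ c_{Y,Z}=\mathrm{id}$ for all objects $Z$ are direct sums of the unit object. *)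

theory Defs
  imports "HOL-Algebra.Group" "HOL-Computational_Algebra.Polynomial"
begin

definition finite_crossed_module ::
  "('g, 'a) monoid_scheme \<Rightarrow> ('x, 'b) monoid_scheme \<Rightarrow> ('g \<Rightarrow> 'x \<Rightarrow> 'x) \<Rightarrow> ('x \<Rightarrow> 'g) \<Rightarrow> bool"
where
  "finite_crossed_module G X act d \<longleftrightarrow>
     group G \<and> group X \<and> finite (carrier G) \<and> finite (carrier X) \<and>
     (\<forall>g\<in>carrier G. \<forall>x\<in>carrier X. act g x \<in> carrier X) \<and>
     (\<forall>x\<in>carrier X. act \<one>\<^bsub>G\<^esub> x = x) \<and>
     (\<forall>g\<in>carrier G. \<forall>h\<in>carrier G. \<forall>x\<in>carrier X. act (g \<otimes>\<^bsub>G\<^esub> h) x = act g (act h x)) \<and>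
     (\<forall>g\<in>carrier G. \<forall>x\<in>carrier X. \<forall>y\<in>carrier X.
        act g (x \<otimes>\<^bsub>X\<^esub> y) = act g x \<otimes>\<^bsub>X\<^esub> act g y) \<and>
     d \<in> hom X G \<and>
     (\<forall>x\<in>carrier X. \<forall>y\<in>carrier X. act (d x) y = x \<otimes>\<^bsub>X\<^esub> y \<otimes>\<^bsub>X\<^esub> inv\<^bsub>X\<^esub> x) \<and>
     (\<forall>g\<in>carrier G. \<forall>x\<in>carrier X. d (act g x) = g \<otimes>\<^bsub>G\<^esub> d x \<otimes>\<^bsub>G\<^esub> inv\<^bsub>G\<^esub> g)"

definition quasi_abelian_3cocycle ::
  "('g, 'a) monoid_scheme \<Rightarrow> ('x, 'b) monoid_scheme \<Rightarrow> ('g \<Rightarrow> 'x \<Rightarrow> 'x) \<Rightarrow> ('x \<Rightarrow> 'g) \<Rightarrow>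
   ('x \<Rightarrow> 'x \<Rightarrow> 'x \<Rightarrow> 'k::field) \<Rightarrow> ('g \<Rightarrow> 'g \<Rightarrow> 'x \<Rightarrow> 'k) \<Rightarrow>
   ('g \<Rightarrow> 'x \<Rightarrow> 'x \<Rightarrow> 'k) \<Rightarrow> ('x \<Rightarrow> 'x \<Rightarrow> 'k) \<Rightarrow> bool"
where
  "quasi_abelian_3cocycle G X act d \<omega> \<gamma> \<mu> c \<longleftrightarrow>
    (let mX = (\<lambda>a b. a \<otimes>\<^bsub>X\<^esub> b); mG = (\<lambda>a b. a \<otimes>\<^bsub>G\<^esub> b); iX = (\<lambda>a. inv\<^bsub>X\<^esub> a); iG = (\<lambda>a. inv\<^bsub>G\<^esub> a);
         CG = carrier G; CX = carrier X in
    \<comment> \<open>values in K^x\<close>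
    (\<forall>x\<in>CX. \<forall>y\<in>CX. \<forall>z\<in>CX. \<omega> x y z \<noteq> 0) \<and>
    (\<forall>g\<in>CG. \<forall>h\<in>CG. \<forall>x\<in>CX. \<gamma> g h x \<noteq> 0) \<and>
    (\<forall>g\<in>CG. \<forall>x\<in>CX. \<forall>y\<in>CX. \<mu> g x y \<noteq> 0) \<and>
    (\<forall>x\<in>CX. \<forall>y\<in>CX. c x y \<noteq> 0) \<and>
    \<comment> \<open>(a)\<close>
    (\<forall>w\<in>CX. \<forall>x\<in>CX. \<forall>y\<in>CX. \<forall>z\<in>CX.
       \<omega> x y z * \<omega> w (mX x y) z * \<omega> w x y = \<omega> w x (mX y z) * \<omega> (mX w x) y z) \<and>
    \<comment> \<open>(b)\<close>
    (\<forall>g\<in>CG. \<forall>h\<in>CG. \<forall>k\<in>CG. \<forall>x\<in>CX.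
       \<gamma> h k x * \<gamma> g (mG h k) x = \<gamma> (mG g h) k x * \<gamma> g h (act k x)) \<and>
    \<comment> \<open>(c)\<close>
    (\<forall>g\<in>CG. \<forall>x\<in>CX. \<forall>y\<in>CX. \<forall>z\<in>CX.
       (\<mu> g y z * \<mu> g x (mX y z)) / (\<mu> g (mX x y) z * \<mu> g x y)
         = \<omega> (act g x) (act g y) (act g z) / \<omega> x y z) \<and>
    \<comment> \<open>(d)\<close>
    (\<forall>g\<in>CG. \<forall>h\<in>CG. \<forall>x\<in>CX. \<forall>y\<in>CX.
       (\<gamma> g h x * \<gamma> g h y) / \<gamma> g h (mX x y)
         = (\<mu> g (act h x) (act h y) * \<mu> h x y) / \<mu> (mG g h) x y) \<and>
    \<comment> \<open>(e)\<close>
    (\<forall>g\<in>CG. \<forall>x\<in>CX. \<forall>y\<in>CX.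
       c (act g x) (act g y) / c x y
         = (\<mu> g (mX (mX x y) (iX x)) x / \<mu> g x y) *
           (\<gamma> (mG (mG g (d x)) (iG g)) g y / \<gamma> g (d x) y)) \<and>
    \<comment> \<open>(f)\<close>
    (\<forall>x\<in>CX. \<forall>y\<in>CX. \<forall>z\<in>CX.
       c (mX x y) z
         = (\<omega> x y z * \<omega> (mX (mX (mX x y) z) (iX (mX x y))) x y)
             / (\<omega> x (mX (mX y z) (iX y)) y * \<gamma> (d x) (d y) z)
           * c x (mX (mX y z) (iX y)) * c y z) \<and>
    \<comment> \<open>(g)\<close>
    (\<forall>x\<in>CX. \<forall>y\<in>CX. \<forall>z\<in>CX.
       c x (mX y z)
         = \<omega> (mX (mX x y) (iX x)) x z
             / (\<omega> x y z * \<omega> (mX (mX x y) (iX x)) (mX (mX x z) (iX x)) x * \<mu> (d x) y z)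
           * c x y * c x z))"

definition normalized_cocycle ::
  "('g, 'a) monoid_scheme \<Rightarrow> ('x, 'b) monoid_scheme \<Rightarrow>
   ('x \<Rightarrow> 'x \<Rightarrow> 'x \<Rightarrow> 'k::field) \<Rightarrow> ('g \<Rightarrow> 'g \<Rightarrow> 'x \<Rightarrow> 'k) \<Rightarrow>
   ('g \<Rightarrow> 'x \<Rightarrow> 'x \<Rightarrow> 'k) \<Rightarrow> ('x \<Rightarrow> 'x \<Rightarrow> 'k) \<Rightarrow> bool"
where
  "normalized_cocycle G X \<omega> \<gamma> \<mu> c \<longleftrightarrow>
    (let eX = \<one>\<^bsub>X\<^esub>; eG = \<one>\<^bsub>G\<^esub>; CG = carrier G; CX = carrier X in
    (\<forall>x\<in>CX. \<forall>y\<in>CX. \<forall>z\<in>CX. (x = eX \<or> y = eX \<or> z = eX) \<longrightarrow> \<omega> x y z = 1) \<and>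
    (\<forall>g\<in>CG. \<forall>h\<in>CG. \<forall>x\<in>CX. (g = eG \<or> h = eG \<or> x = eX) \<longrightarrow> \<gamma> g h x = 1) \<and>
    (\<forall>g\<in>CG. \<forall>x\<in>CX. \<forall>y\<in>CX. (g = eG \<or> x = eX \<or> y = eX) \<longrightarrow> \<mu> g x y = 1) \<and>
    (\<forall>x\<in>CX. \<forall>y\<in>CX. (x = eX \<or> y = eX) \<longrightarrow> c x y = 1))"

definition nondegenerate_cocycle ::
  "('g, 'a) monoid_scheme \<Rightarrow> ('x, 'b) monoid_scheme \<Rightarrow> ('x \<Rightarrow> 'g) \<Rightarrow> ('x \<Rightarrow> 'x \<Rightarrow> 'k::field) \<Rightarrow> bool"
where
  "nondegenerate_cocycle G X d c \<longleftrightarrow>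
    (let K = {x \<in> carrier X. d x = \<one>\<^bsub>G\<^esub>} in
     \<forall>x\<in>K. (\<forall>y\<in>K. c y x * c x y = 1) \<longrightarrow> x = \<one>\<^bsub>X\<^esub>)"

text \<open>An object of C(xi)^G is modelled by an X-graded vector space with a finite basis
  B (a finite set of natural numbers), a degree function on the basis, and for every g
  the matrix (w.r.t. this basis; rows = target, columns = source) of u_g : T_g(V) -> V.
  T_g(V) has the same underlying space and basis, the basis vector b in degree act g (deg b).\<close>

type_synonym ('g, 'x, 'k) eq_obj = "nat set \<times> (nat \<Rightarrow> 'x) \<times> ('g \<Rightarrow> nat \<Rightarrow> nat \<Rightarrow> 'k)"

definition mat_comp :: "nat set \<Rightarrow> (nat \<Rightarrow> nat \<Rightarrow> 'k::field) \<Rightarrow> (nat \<Rightarrow> nat \<Rightarrow> 'k) \<Rightarrow> nat \<Rightarrow> nat \<Rightarrow> 'k"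
  where "mat_comp B M N i k = (\<Sum>j\<in>B. M i j * N j k)"

definition is_eq_obj ::
  "('g, 'a) monoid_scheme \<Rightarrow> ('x, 'b) monoid_scheme \<Rightarrow> ('g \<Rightarrow> 'x \<Rightarrow> 'x) \<Rightarrow>
   ('g \<Rightarrow> 'g \<Rightarrow> 'x \<Rightarrow> 'k::field) \<Rightarrow> ('g, 'x, 'k) eq_obj \<Rightarrow> bool"
where
  "is_eq_obj G X act \<gamma> V \<longleftrightarrow>
    (case V of (B, deg, u) \<Rightarrow>
      finite B \<and> (\<forall>b\<in>B. deg b \<in> carrier X) \<and>
      \<comment> \<open>u_g is a morphism of graded spaces T_g(V) -> V\<close>
      (\<forall>g\<in>carrier G. \<forall>b'\<in>B. \<forall>b\<in>B. u g b' b \<noteq> 0 \<longrightarrow> deg b' = act g (deg b)) \<and>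
      \<comment> \<open>u_g is an isomorphism\<close>
      (\<forall>g\<in>carrier G. \<exists>v. (\<forall>b'\<in>B. \<forall>b\<in>B. v b' b \<noteq> 0 \<longrightarrow> act g (deg b') = deg b) \<and>
          (\<forall>i\<in>B. \<forall>k\<in>B. mat_comp B v (u g) i k = (if i = k then 1 else 0)) \<and>
          (\<forall>i\<in>B. \<forall>k\<in>B. mat_comp B (u g) v i k = (if i = k then 1 else 0))) \<and>
      \<comment> \<open>u_{gh} = u_g o T_g(u_h) o gamma~_{g,h}(V)\<close>
      (\<forall>g\<in>carrier G. \<forall>h\<in>carrier G. \<forall>b'\<in>B. \<forall>b\<in>B.
         u (g \<otimes>\<^bsub>G\<^esub> h) b' b = mat_comp B (u g) (u h) b' b * \<gamma> g h (deg b)))"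

definition is_eq_mor ::
  "('g, 'a) monoid_scheme \<Rightarrow> ('g, 'x, 'k::field) eq_obj \<Rightarrow> ('g, 'x, 'k) eq_obj \<Rightarrow>
   (nat \<Rightarrow> nat \<Rightarrow> 'k) \<Rightarrow> bool"
where
  "is_eq_mor G V W f \<longleftrightarrow>
    (case V of (B, deg, u) \<Rightarrow> case W of (B', deg', u') \<Rightarrow>
      (\<forall>b'\<in>B'. \<forall>b\<in>B. f b' b \<noteq> 0 \<longrightarrow> deg' b' = deg b) \<and>
      (\<forall>g\<in>carrier G. \<forall>b'\<in>B'. \<forall>b\<in>B. mat_comp B f (u g) b' b = mat_comp B' (u' g) f b' b))"

definition eq_iso ::
  "('g, 'a) monoid_scheme \<Rightarrow> ('g, 'x, 'k::field) eq_obj \<Rightarrow> ('g, 'x, 'k) eq_obj \<Rightarrow> bool"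
where
  "eq_iso G V W \<longleftrightarrow>
    (\<exists>f f'. is_eq_mor G V W f \<and> is_eq_mor G W V f' \<and>
       (\<forall>i\<in>fst V. \<forall>k\<in>fst V. mat_comp (fst W) f' f i k = (if i = k then 1 else 0)) \<and>
       (\<forall>i\<in>fst W. \<forall>k\<in>fst W. mat_comp (fst V) f f' i k = (if i = k then 1 else 0)))"

text \<open>Direct sum of n copies of the unit object (K in degree e with u_g = id).\<close>
definition unit_sum :: "('x, 'b) monoid_scheme \<Rightarrow> nat \<Rightarrow> ('g, 'x, 'k::field) eq_obj"
  where "unit_sum X n = ({..<n}, (\<lambda>_. \<one>\<^bsub>X\<^esub>), (\<lambda>g i j. if i = j then 1 else 0))"

text \<open>Braiding c_{Y,Z} : Y (x) Z -> Z (x) Y, as a matrix indexed by basis pairs: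
  on a (x) b with deg a = y, deg b = z it is (u^Z_{d y} (x) id) o c(y,z) flip.\<close>
definition braid ::
  "('x \<Rightarrow> 'g) \<Rightarrow> ('x \<Rightarrow> 'x \<Rightarrow> 'k::field) \<Rightarrow> ('g, 'x, 'k) eq_obj \<Rightarrow> ('g, 'x, 'k) eq_obj \<Rightarrow>
   (nat \<times> nat) \<Rightarrow> (nat \<times> nat) \<Rightarrow> 'k"
where
  "braid d c Y Z = (\<lambda>(b', a') (a, b).
     (case Y of (BY, degY, uY) \<Rightarrow> case Z of (BZ, degZ, uZ) \<Rightarrow>
       if a' = a then c (degY a) (degZ b) * uZ (d (degY a)) b' b else 0))"

definition double_braid_id ::
  "('x \<Rightarrow> 'g) \<Rightarrow> ('x \<Rightarrow> 'x \<Rightarrow> 'k::field) \<Rightarrow> ('g, 'x, 'k) eq_obj \<Rightarrow> ('g, 'x, 'k) eq_obj \<Rightarrow> bool"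
where
  "double_braid_id d c Y Z \<longleftrightarrow>
    (\<forall>p\<in>fst Y \<times> fst Z. \<forall>q\<in>fst Y \<times> fst Z.
       (\<Sum>r\<in>fst Z \<times> fst Y. braid d c Z Y p r * braid d c Y Z r q) = (if p = q then 1 else 0))"

definition eq_cat_nondegenerate ::
  "('g, 'a) monoid_scheme \<Rightarrow> ('x, 'b) monoid_scheme \<Rightarrow> ('g \<Rightarrow> 'x \<Rightarrow> 'x) \<Rightarrow> ('x \<Rightarrow> 'g) \<Rightarrow>
   ('g \<Rightarrow> 'g \<Rightarrow> 'x \<Rightarrow> 'k::field) \<Rightarrow> ('x \<Rightarrow> 'x \<Rightarrow> 'k) \<Rightarrow> bool"
where
  "eq_cat_nondegenerate G X act d \<gamma> c \<longleftrightarrow>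
    (\<forall>Y. is_eq_obj G X act \<gamma> Y \<longrightarrow>
       (\<forall>Z. is_eq_obj G X act \<gamma> Z \<longrightarrow> double_braid_id d c Y Z \<and> double_braid_id d c Z Y) \<longrightarrow>
       (\<exists>n. eq_iso G Y (unit_sum X n)))"

end

theory Submission
  imports Defs "HOL-Algebra.Left_Coset"
begin

text \<open>Nondegeneracy of \<open>\<C>(\<xi>)\<^sup>G\<close> is a statement about transparent objects, those whose double
  braiding with every object is the identity. Testing a transparent \<open>Y\<close> against the objects induced
  from the one-dimensional spaces in each degree \<open>z\<close> shows that the degrees of \<open>Y\<close> lie in
  \<open>Ker \<partial>\<close> and in the radical of \<open>(x, y) \<mapsto> c(y, x) c(x, y)\<close>, and that every \<open>u\<^bsub>\<partial>z\<^esub>\<close> is the identity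
  on \<open>Y\<close>; so if \<open>\<partial>\<close> is onto and \<open>\<xi>\<close> nondegenerate, \<open>Y\<close> is a sum of units. Conversely, if \<open>\<partial>\<close> is
  not onto, the permutation module on \<open>G/\<partial>(X)\<close> placed in degree \<open>\<one>\<close> is transparent but not trivial,
  and a nontrivial \<open>x\<close> in the radical yields a transparent one-dimensional object in degree \<open>x\<close>.
  Neither direction needs the field to be algebraically closed or of characteristic zero.\<close>

lemma mat_comp_assoc:
  assumes "finite B" "finite C"
  shows "mat_comp B (mat_comp C M N) P i k = mat_comp C M (mat_comp B N P) i k"
proof -
  have "mat_comp B (mat_comp C M N) P i k = (\<Sum>j\<in>B. \<Sum>l\<in>C. M i l * (N l j * P j k))"
    by (simp add: mat_comp_def sum_distrib_right mult.assoc)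
  also have "\<dots> = (\<Sum>l\<in>C. \<Sum>j\<in>B. M i l * (N l j * P j k))"
    by (rule sum.swap)
  also have "\<dots> = mat_comp C M (mat_comp B N P) i k"
    by (simp add: mat_comp_def sum_distrib_left)
  finally show ?thesis .
qed

lemma mat_comp_id_left:
  "finite B \<Longrightarrow> i \<in> B \<Longrightarrow> mat_comp B (\<lambda>i j. if i = j then 1 else 0) M i k = M i k"
proof -
  assume "finite B" "i \<in> B"
  have "mat_comp B (\<lambda>i j. if i = j then 1 else 0) M i k = (\<Sum>j\<in>B. if i = j then M j k else 0)"
    unfolding mat_comp_def by (intro sum.cong) auto
  then show ?thesis using \<open>finite B\<close> \<open>i \<in> B\<close> by simp
qed

lemma mat_comp_id_right:
  "finite B \<Longrightarrow> k \<in> B \<Longrightarrow> mat_comp B M (\<lambda>i j. if i = j then 1 else 0) i k = M i k"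
proof -
  assume "finite B" "k \<in> B"
  have "mat_comp B M (\<lambda>i j. if i = j then 1 else 0) i k = (\<Sum>j\<in>B. if j = k then M i j else 0)"
    unfolding mat_comp_def by (intro sum.cong) auto
  then show ?thesis using \<open>finite B\<close> \<open>k \<in> B\<close> by simp
qed

lemma sum_bij_betw_delta:
  fixes N :: nat
  assumes enc: "bij_betw enc {..<N} S" and t: "t \<in> S"
  shows "(\<Sum>j<N. if enc j = t then F j else 0) = F (inv_into {..<N} enc t)"
proof -
  have "enc j = t \<longleftrightarrow> j = inv_into {..<N} enc t" if "j < N" for j
    using enc t that by (metis bij_betw_imp_inj_on bij_betw_inv_into_right inv_into_f_f lessThan_iff)
  then have "(\<Sum>j<N. if enc j = t then F j else 0) = (\<Sum>j<N. if j = inv_into {..<N} enc t then F j else 0)"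
    by (intro sum.cong) auto
  also have "\<dots> = F (inv_into {..<N} enc t)"
  proof -
    have "inv_into {..<N} enc t \<in> {..<N}"
      using enc t by (metis bij_betw_def inv_into_into)
    then show ?thesis by simp
  qed
  finally show ?thesis .
qed

text \<open>Basis vectors are indexed by a set \<open>S\<close> through the enumeration \<open>enc\<close>; the matrix sends the
  vector of \<open>s\<close> to \<open>l s\<close> times the vector of \<open>\<pi> s\<close>.\<close>
definition monomial_mat :: "(nat \<Rightarrow> 's) \<Rightarrow> ('s \<Rightarrow> 's) \<Rightarrow> ('s \<Rightarrow> 'k::field) \<Rightarrow> nat \<Rightarrow> nat \<Rightarrow> 'k"
  where "monomial_mat enc \<pi> l i j = (if enc i = \<pi> (enc j) then l (enc j) else 0)"

lemma monomial_mat_mult: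
  fixes N :: nat
  assumes enc: "bij_betw enc {..<N} S" and "\<sigma> (enc k) \<in> S"
  shows "mat_comp {..<N} (monomial_mat enc \<pi> l) (monomial_mat enc \<sigma> m) i k
           = monomial_mat enc (\<pi> \<circ> \<sigma>) (\<lambda>s. l (\<sigma> s) * m s) i k"
proof -
  let ?t = "\<sigma> (enc k)"
  have "mat_comp {..<N} (monomial_mat enc \<pi> l) (monomial_mat enc \<sigma> m) i k
      = (\<Sum>j<N. if enc j = ?t then monomial_mat enc \<pi> l i j * m (enc k) else 0)"
    unfolding mat_comp_def by (intro sum.cong) (auto simp: monomial_mat_def)
  also have "\<dots> = monomial_mat enc \<pi> l i (inv_into {..<N} enc ?t) * m (enc k)"
    by (rule sum_bij_betw_delta[OF assms])
  also have "\<dots> = monomial_mat enc (\<pi> \<circ> \<sigma>) (\<lambda>s. l (\<sigma> s) * m s) i k"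
    using assms by (simp add: monomial_mat_def bij_betw_inv_into_right)
  finally show ?thesis .
qed

lemma monomial_mat_eq_id:
  assumes "bij_betw enc {..<N} S" "i < N" "k < N" "\<pi> (enc k) = enc k" "l (enc k) = 1"
  shows "monomial_mat enc \<pi> l i k = (if i = k then 1 else 0)"
  using assms by (auto simp: monomial_mat_def bij_betw_def inj_on_def)

lemma is_eq_obj_monomial:
  fixes N :: nat and \<gamma> :: "'g \<Rightarrow> 'g \<Rightarrow> 'x \<Rightarrow> 'k::field"
  assumes G: "group G" and enc: "bij_betw enc {..<N} S"
    and p_closed: "\<And>h s. h \<in> carrier G \<Longrightarrow> s \<in> S \<Longrightarrow> p h s \<in> S"
    and p_one: "\<And>s. s \<in> S \<Longrightarrow> p \<one>\<^bsub>G\<^esub> s = s"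
    and p_mult: "\<And>g h s. g \<in> carrier G \<Longrightarrow> h \<in> carrier G \<Longrightarrow> s \<in> S \<Longrightarrow>
                   p (g \<otimes>\<^bsub>G\<^esub> h) s = p g (p h s)"
    and \<delta>_closed: "\<And>s. s \<in> S \<Longrightarrow> \<delta> s \<in> carrier X"
    and \<delta>_equivariant: "\<And>h s. h \<in> carrier G \<Longrightarrow> s \<in> S \<Longrightarrow> \<delta> (p h s) = act h (\<delta> s)"
    and lam_nonzero: "\<And>h s. h \<in> carrier G \<Longrightarrow> s \<in> S \<Longrightarrow> lam h s \<noteq> 0"
    and lam_mult: "\<And>g h s. g \<in> carrier G \<Longrightarrow> h \<in> carrier G \<Longrightarrow> s \<in> S \<Longrightarrow>
                     lam (g \<otimes>\<^bsub>G\<^esub> h) s = lam g (p h s) * lam h s * \<gamma> g h (\<delta> s)"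
  shows "is_eq_obj G X act \<gamma> ({..<N}, \<lambda>j. \<delta> (enc j), \<lambda>h. monomial_mat enc (p h) (lam h))"
proof -
  interpret group G by (rule G)
  let ?u = "\<lambda>h. monomial_mat enc (p h) (lam h)"
  let ?v = "\<lambda>h. monomial_mat enc (p (inv\<^bsub>G\<^esub> h)) (\<lambda>s. 1 / lam h (p (inv\<^bsub>G\<^esub> h) s))"
  have encS: "enc j \<in> S" if "j < N" for j
    using enc that by (auto simp: bij_betw_def)
  have p_inv: "p (inv\<^bsub>G\<^esub> h) (p h s) = s" "p h (p (inv\<^bsub>G\<^esub> h) s) = s" if "h \<in> carrier G" "s \<in> S" for h s
    using that p_mult[of "inv\<^bsub>G\<^esub> h" h s] p_mult[of h "inv\<^bsub>G\<^esub> h" s] by (simp_all add: p_one)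
  have invertible: "\<exists>v. (\<forall>b'\<in>{..<N}. \<forall>b\<in>{..<N}. v b' b \<noteq> 0 \<longrightarrow> act h (\<delta> (enc b')) = \<delta> (enc b)) \<and>
      (\<forall>i\<in>{..<N}. \<forall>k\<in>{..<N}. mat_comp {..<N} v (?u h) i k = (if i = k then 1 else 0)) \<and>
      (\<forall>i\<in>{..<N}. \<forall>k\<in>{..<N}. mat_comp {..<N} (?u h) v i k = (if i = k then 1 else 0))"
    if h: "h \<in> carrier G" for h
  proof (intro exI conjI ballI impI)
    fix b' b assume b: "b \<in> {..<N}" and "?v h b' b \<noteq> 0"
    then have "enc b' = p (inv\<^bsub>G\<^esub> h) (enc b)"
      by (auto simp: monomial_mat_def split: if_splits)
    then show "act h (\<delta> (enc b')) = \<delta> (enc b)"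
      using h b encS p_closed p_inv \<delta>_equivariant[of h "enc b'"] by simp
  next
    fix i k assume "i \<in> {..<N}" "k \<in> {..<N}"
    then show "mat_comp {..<N} (?v h) (?u h) i k = (if i = k then 1 else 0)"
      and "mat_comp {..<N} (?u h) (?v h) i k = (if i = k then 1 else 0)"
      using h encS p_closed p_inv lam_nonzero
      by (simp_all add: monomial_mat_mult[OF enc] monomial_mat_eq_id[OF enc])
  qed
  show ?thesis
    unfolding is_eq_obj_def prod.case
  proof (intro conjI ballI impI)
    fix g b' b assume "g \<in> carrier G" "b' \<in> {..<N}" "b \<in> {..<N}" "?u g b' b \<noteq> 0"
    then show "\<delta> (enc b') = act g (\<delta> (enc b))"
      using encS \<delta>_equivariant by (auto simp: monomial_mat_def split: if_splits)
  next
    fix g h b' b assume "g \<in> carrier G" "h \<in> carrier G" "b' \<in> {..<N}" "b \<in> {..<N}"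
    then show "?u (g \<otimes>\<^bsub>G\<^esub> h) b' b = mat_comp {..<N} (?u g) (?u h) b' b * \<gamma> g h (\<delta> (enc b))"
      using encS p_closed p_mult lam_mult by (simp add: monomial_mat_mult[OF enc] monomial_mat_def)
  qed (use encS \<delta>_closed invertible in auto)
qed

lemma double_braid_id_iff:
  assumes "finite BY" "finite BZ"
  shows "double_braid_id d c (BY, dY, uY) (BZ, dZ, uZ) \<longleftrightarrow>
    (\<forall>a1\<in>BY. \<forall>b1\<in>BZ. \<forall>a2\<in>BY. \<forall>b2\<in>BZ.
      c (dZ b1) (dY a2) * uY (d (dZ b1)) a1 a2 * (c (dY a2) (dZ b2) * uZ (d (dY a2)) b1 b2)
        = (if a1 = a2 \<and> b1 = b2 then 1 else 0))"
proof -
  have "(\<Sum>r\<in>BZ \<times> BY. braid d c (BZ, dZ, uZ) (BY, dY, uY) (a1, b1) r * braid d c (BY, dY, uY) (BZ, dZ, uZ) r (a2, b2))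
      = c (dZ b1) (dY a2) * uY (d (dZ b1)) a1 a2 * (c (dY a2) (dZ b2) * uZ (d (dY a2)) b1 b2)"
    if "b1 \<in> BZ" "a2 \<in> BY" for a1 b1 a2 b2
  proof -
    have "(\<Sum>r\<in>BZ \<times> BY. braid d c (BZ, dZ, uZ) (BY, dY, uY) (a1, b1) r * braid d c (BY, dY, uY) (BZ, dZ, uZ) r (a2, b2))
      = (\<Sum>r\<in>BZ \<times> BY. if r = (b1, a2)
           then c (dZ b1) (dY a2) * uY (d (dZ b1)) a1 a2 * (c (dY a2) (dZ b2) * uZ (d (dY a2)) b1 b2) else 0)"
      by (rule sum.cong) (auto simp: braid_def split: if_splits)
    then show ?thesis using assms that by simp
  qed
  then show ?thesis unfolding double_braid_id_def by (auto simp: prod_eq_iff)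
qed

lemma is_eq_obj_u_one:
  assumes obj: "is_eq_obj G X act \<gamma> (B, deg, u)" and G: "group G"
    and \<gamma>_one: "\<And>b. b \<in> B \<Longrightarrow> \<gamma> \<one>\<^bsub>G\<^esub> \<one>\<^bsub>G\<^esub> (deg b) = 1"
    and "i \<in> B" "k \<in> B"
  shows "u \<one>\<^bsub>G\<^esub> i k = (if i = k then 1 else 0)"
proof -
  let ?e = "\<one>\<^bsub>G\<^esub>"
  have e: "?e \<in> carrier G" "?e \<otimes>\<^bsub>G\<^esub> ?e = ?e"
    using G by (simp_all add: group.is_monoid)
  have fin: "finite B" using obj by (simp add: is_eq_obj_def)
  have idem: "mat_comp B (u ?e) (u ?e) i k = u ?e i k" if "i \<in> B" "k \<in> B" for i k
  proof -
    have "u (?e \<otimes>\<^bsub>G\<^esub> ?e) i k = mat_comp B (u ?e) (u ?e) i k * \<gamma> ?e ?e (deg k)"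
      using obj e that unfolding is_eq_obj_def by blast
    then show ?thesis using e \<gamma>_one that by simp
  qed
  obtain v where v: "\<forall>i\<in>B. \<forall>k\<in>B. mat_comp B v (u ?e) i k = (if i = k then 1 else 0)"
    using obj e(1) unfolding is_eq_obj_def prod.case by blast
  have "u ?e i k = mat_comp B (\<lambda>i j. if i = j then 1 else 0) (u ?e) i k"
    by (rule mat_comp_id_left[OF fin \<open>i \<in> B\<close>, symmetric])
  also have "\<dots> = mat_comp B (mat_comp B v (u ?e)) (u ?e) i k"
    unfolding mat_comp_def[of B "\<lambda>i j. if i = j then 1 else 0"] mat_comp_def[of B "mat_comp B v (u ?e)"]
    using v \<open>i \<in> B\<close> by (intro sum.cong) auto
  also have "\<dots> = mat_comp B v (mat_comp B (u ?e) (u ?e)) i k"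
    by (rule mat_comp_assoc[OF fin fin])
  also have "\<dots> = mat_comp B v (u ?e) i k"
    unfolding mat_comp_def[of B v] using idem \<open>k \<in> B\<close> by (intro sum.cong) auto
  finally show ?thesis using v assms(4,5) by simp
qed

lemma eq_iso_unit_sumD:
  assumes iso: "eq_iso G (B, deg, u) (unit_sum X n)" and fin: "finite B"
  shows "\<forall>b\<in>B. deg b = \<one>\<^bsub>X\<^esub>"
    and "\<forall>g\<in>carrier G. \<forall>i\<in>B. \<forall>k\<in>B. u g i k = (if i = k then 1 else 0)"
proof -
  obtain f f' where mor: "is_eq_mor G (unit_sum X n) (B, deg, u) f'"
    and inv: "\<forall>i\<in>B. \<forall>k\<in>B. mat_comp {..<n} f' f i k = (if i = k then 1 else 0)"
    using iso unfolding eq_iso_def by (auto simp only: unit_sum_def fst_conv)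
  have f'_deg: "deg b = \<one>\<^bsub>X\<^esub>" if "b \<in> B" "j < n" "f' b j \<noteq> 0" for b j
    using mor that unfolding is_eq_mor_def unit_sum_def prod.case by blast
  have f'_comm: "mat_comp B (u g) f' b j = f' b j" if "g \<in> carrier G" "b \<in> B" "j < n" for g b j
  proof -
    have "mat_comp {..<n} f' (\<lambda>i j. if i = j then 1 else 0) b j = mat_comp B (u g) f' b j"
      using mor that unfolding is_eq_mor_def unit_sum_def prod.case by blast
    then show ?thesis using mat_comp_id_right[of "{..<n}" j f' b] that by simp
  qed
  show "\<forall>b\<in>B. deg b = \<one>\<^bsub>X\<^esub>"
  proof
    fix b assume b: "b \<in> B"
    then have "(\<Sum>j<n. f' b j * f j b) \<noteq> 0"
      using inv by (simp add: mat_comp_def)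
    then obtain j where "j \<in> {..<n}" "f' b j * f j b \<noteq> 0"
      by (rule sum.not_neutral_contains_not_neutral)
    then show "deg b = \<one>\<^bsub>X\<^esub>" using f'_deg b by simp
  qed
  show "\<forall>g\<in>carrier G. \<forall>i\<in>B. \<forall>k\<in>B. u g i k = (if i = k then 1 else 0)"
  proof (intro ballI)
    fix g i k assume g: "g \<in> carrier G" and i: "i \<in> B" and k: "k \<in> B"
    have "u g i k = mat_comp B (u g) (\<lambda>i j. if i = j then 1 else 0) i k"
      by (rule mat_comp_id_right[OF fin k, symmetric])
    also have "\<dots> = mat_comp B (u g) (mat_comp {..<n} f' f) i k"
      unfolding mat_comp_def[of B "u g"] using inv k by (intro sum.cong) auto
    also have "\<dots> = mat_comp {..<n} (mat_comp B (u g) f') f i k"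
      by (rule mat_comp_assoc[OF finite_lessThan fin, symmetric])
    also have "\<dots> = mat_comp {..<n} f' f i k"
      unfolding mat_comp_def[of "{..<n}"] using f'_comm g i by (intro sum.cong) auto
    finally show "u g i k = (if i = k then 1 else 0)" using inv i k by simp
  qed
qed

lemma eq_iso_unit_sumI:
  fixes u :: "'g \<Rightarrow> nat \<Rightarrow> nat \<Rightarrow> 'k::field"
  assumes fin: "finite B" and deg: "\<And>b. b \<in> B \<Longrightarrow> deg b = \<one>\<^bsub>X\<^esub>"
    and u: "\<And>g i k. g \<in> carrier G \<Longrightarrow> i \<in> B \<Longrightarrow> k \<in> B \<Longrightarrow> u g i k = (if i = k then 1 else 0)"
  shows "eq_iso G (B, deg, u) (unit_sum X (card B))"
proof -
  let ?n = "card B" and ?I = "\<lambda>i j. if i = j then 1 else (0::'k)"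
  obtain e where e: "bij_betw e {..<?n} B"
    using ex_bij_betw_nat_finite[OF fin] by (auto simp: atLeast0LessThan)
  define f where "f i b = (if e i = b then 1 else (0::'k))" for i b
  define f' where "f' b i = (if e i = b then 1 else (0::'k))" for b i
  have u_id: "mat_comp B M (u g) i k = M i k" "mat_comp B (u g) M k i = M k i"
    if "g \<in> carrier G" "k \<in> B" for M g i k
  proof -
    show "mat_comp B M (u g) i k = M i k"
      using mat_comp_id_right[OF fin \<open>k \<in> B\<close>, of M i] u that by (simp add: mat_comp_def)
    show "mat_comp B (u g) M k i = M k i"
      using mat_comp_id_left[OF fin \<open>k \<in> B\<close>, of M i] u that by (simp add: mat_comp_def)
  qed
  have "is_eq_mor G (B, deg, u) (unit_sum X ?n) f"
    unfolding is_eq_mor_def unit_sum_def prod.case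
  proof (intro conjI ballI impI)
    fix g b' b assume "g \<in> carrier G" "b' \<in> {..<?n}" "b \<in> B"
    then show "mat_comp B f (u g) b' b = mat_comp {..<?n} ?I f b' b"
      by (simp add: u_id mat_comp_id_left)
  qed (use deg in simp)
  moreover have "is_eq_mor G (unit_sum X ?n) (B, deg, u) f'"
    unfolding is_eq_mor_def unit_sum_def prod.case
  proof (intro conjI ballI impI)
    fix g b' b assume "g \<in> carrier G" "b' \<in> B" "b \<in> {..<?n}"
    then show "mat_comp {..<?n} f' ?I b' b = mat_comp B (u g) f' b' b"
      by (simp add: u_id mat_comp_id_right)
  qed (use deg in simp)
  moreover have "mat_comp {..<?n} f' f i k = (if i = k then 1 else 0)" if "i \<in> B" "k \<in> B" for i k
  proof -
    have "mat_comp {..<?n} f' f i k = (\<Sum>j<?n. if e j = i then (if e j = k then 1 else 0) else 0)"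
      unfolding mat_comp_def f_def f'_def by (intro sum.cong) auto
    also have "\<dots> = (if e (inv_into {..<?n} e i) = k then 1 else 0)"
      by (rule sum_bij_betw_delta[OF e \<open>i \<in> B\<close>])
    finally show ?thesis using e \<open>i \<in> B\<close> by (simp add: bij_betw_inv_into_right)
  qed
  moreover have "mat_comp B f f' i k = (if i = k then 1 else 0)" if "i < ?n" "k < ?n" for i k
  proof -
    have "mat_comp B f f' i k = (\<Sum>b\<in>B. if e i = b then (if e k = b then 1 else 0) else 0)"
      unfolding mat_comp_def f_def f'_def by (intro sum.cong) auto
    then show ?thesis using e that fin by (auto simp: bij_betw_def inj_on_def)
  qed
  ultimately show ?thesis
    unfolding eq_iso_def by (intro exI[of _ f] exI[of _ f']) (simp add: unit_sum_def)
qed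

definition transparent ::
  "('g, 'a) monoid_scheme \<Rightarrow> ('x, 'b) monoid_scheme \<Rightarrow> ('g \<Rightarrow> 'x \<Rightarrow> 'x) \<Rightarrow> ('x \<Rightarrow> 'g) \<Rightarrow>
   ('g \<Rightarrow> 'g \<Rightarrow> 'x \<Rightarrow> 'k::field) \<Rightarrow> ('x \<Rightarrow> 'x \<Rightarrow> 'k) \<Rightarrow> ('g, 'x, 'k) eq_obj \<Rightarrow> bool"
where
  "transparent G X act d \<gamma> c Y \<longleftrightarrow>
     (\<forall>Z. is_eq_obj G X act \<gamma> Z \<longrightarrow> double_braid_id d c Y Z \<and> double_braid_id d c Z Y)"

lemma eq_cat_nondegenerateI:
  "(\<And>Y. is_eq_obj G X act \<gamma> Y \<Longrightarrow> transparent G X act d \<gamma> c Y \<Longrightarrow> \<exists>n. eq_iso G Y (unit_sum X n))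
   \<Longrightarrow> eq_cat_nondegenerate G X act d \<gamma> c"
  by (simp add: eq_cat_nondegenerate_def transparent_def)

lemma eq_cat_nondegenerateD:
  "eq_cat_nondegenerate G X act d \<gamma> c \<Longrightarrow> is_eq_obj G X act \<gamma> Y \<Longrightarrow> transparent G X act d \<gamma> c Y
   \<Longrightarrow> \<exists>n. eq_iso G Y (unit_sum X n)"
  unfolding eq_cat_nondegenerate_def transparent_def by blast

locale normalized_qa_cocycle =
  fixes G :: "('g, 'a) monoid_scheme" and X :: "('x, 'b) monoid_scheme"
    and act :: "'g \<Rightarrow> 'x \<Rightarrow> 'x" and d :: "'x \<Rightarrow> 'g"
    and \<omega> :: "'x \<Rightarrow> 'x \<Rightarrow> 'x \<Rightarrow> 'k::field"
    and \<gamma> :: "'g \<Rightarrow> 'g \<Rightarrow> 'x \<Rightarrow> 'k" and \<mu> :: "'g \<Rightarrow> 'x \<Rightarrow> 'x \<Rightarrow> 'k" and c :: "'x \<Rightarrow> 'x \<Rightarrow> 'k"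
  assumes crossed_module: "finite_crossed_module G X act d"
    and cocycle: "quasi_abelian_3cocycle G X act d \<omega> \<gamma> \<mu> c"
    and normalized: "normalized_cocycle G X \<omega> \<gamma> \<mu> c"
begin

sublocale G: group G
  using crossed_module by (simp add: finite_crossed_module_def)

sublocale X: group X
  using crossed_module by (simp add: finite_crossed_module_def)

sublocale d: group_hom X G d
  using crossed_module by (simp add: finite_crossed_module_def group_hom_def group_hom_axioms_def)

lemma finite_carrier_G: "finite (carrier G)"
  and act_closed: "g \<in> carrier G \<Longrightarrow> x \<in> carrier X \<Longrightarrow> act g x \<in> carrier X"
  and act_id: "x \<in> carrier X \<Longrightarrow> act \<one>\<^bsub>G\<^esub> x = x"
  and act_mult: "g \<in> carrier G \<Longrightarrow> h \<in> carrier G \<Longrightarrow> x \<in> carrier X \<Longrightarrow>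
                   act (g \<otimes>\<^bsub>G\<^esub> h) x = act g (act h x)"
  and act_hom: "g \<in> carrier G \<Longrightarrow> x \<in> carrier X \<Longrightarrow> y \<in> carrier X \<Longrightarrow>
                  act g (x \<otimes>\<^bsub>X\<^esub> y) = act g x \<otimes>\<^bsub>X\<^esub> act g y"
  and act_d: "x \<in> carrier X \<Longrightarrow> y \<in> carrier X \<Longrightarrow> act (d x) y = x \<otimes>\<^bsub>X\<^esub> y \<otimes>\<^bsub>X\<^esub> inv\<^bsub>X\<^esub> x"
  and d_act: "g \<in> carrier G \<Longrightarrow> x \<in> carrier X \<Longrightarrow> d (act g x) = g \<otimes>\<^bsub>G\<^esub> d x \<otimes>\<^bsub>G\<^esub> inv\<^bsub>G\<^esub> g"
  using crossed_module by (simp_all add: finite_crossed_module_def)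

lemma \<omega>_nonzero: "x \<in> carrier X \<Longrightarrow> y \<in> carrier X \<Longrightarrow> z \<in> carrier X \<Longrightarrow> \<omega> x y z \<noteq> 0"
  and \<gamma>_nonzero: "g \<in> carrier G \<Longrightarrow> h \<in> carrier G \<Longrightarrow> x \<in> carrier X \<Longrightarrow> \<gamma> g h x \<noteq> 0"
  and c_nonzero: "x \<in> carrier X \<Longrightarrow> y \<in> carrier X \<Longrightarrow> c x y \<noteq> 0"
  and \<gamma>_cocycle: "g \<in> carrier G \<Longrightarrow> h \<in> carrier G \<Longrightarrow> k \<in> carrier G \<Longrightarrow> x \<in> carrier X \<Longrightarrow>
       \<gamma> h k x * \<gamma> g (h \<otimes>\<^bsub>G\<^esub> k) x = \<gamma> (g \<otimes>\<^bsub>G\<^esub> h) k x * \<gamma> g h (act k x)"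
  and c_mult_left: "x \<in> carrier X \<Longrightarrow> y \<in> carrier X \<Longrightarrow> z \<in> carrier X \<Longrightarrow>
       c (x \<otimes>\<^bsub>X\<^esub> y) z
         = (\<omega> x y z * \<omega> (x \<otimes>\<^bsub>X\<^esub> y \<otimes>\<^bsub>X\<^esub> z \<otimes>\<^bsub>X\<^esub> inv\<^bsub>X\<^esub> (x \<otimes>\<^bsub>X\<^esub> y)) x y)
             / (\<omega> x (y \<otimes>\<^bsub>X\<^esub> z \<otimes>\<^bsub>X\<^esub> inv\<^bsub>X\<^esub> y) y * \<gamma> (d x) (d y) z)
           * c x (y \<otimes>\<^bsub>X\<^esub> z \<otimes>\<^bsub>X\<^esub> inv\<^bsub>X\<^esub> y) * c y z"
  and c_mult_right: "x \<in> carrier X \<Longrightarrow> y \<in> carrier X \<Longrightarrow> z \<in> carrier X \<Longrightarrow>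
       c x (y \<otimes>\<^bsub>X\<^esub> z)
         = \<omega> (x \<otimes>\<^bsub>X\<^esub> y \<otimes>\<^bsub>X\<^esub> inv\<^bsub>X\<^esub> x) x z
             / (\<omega> x y z * \<omega> (x \<otimes>\<^bsub>X\<^esub> y \<otimes>\<^bsub>X\<^esub> inv\<^bsub>X\<^esub> x) (x \<otimes>\<^bsub>X\<^esub> z \<otimes>\<^bsub>X\<^esub> inv\<^bsub>X\<^esub> x) x * \<mu> (d x) y z)
           * c x y * c x z"
  using cocycle unfolding quasi_abelian_3cocycle_def Let_def by metis+

lemma \<gamma>_normalized: "g \<in> carrier G \<Longrightarrow> h \<in> carrier G \<Longrightarrow> x \<in> carrier X \<Longrightarrow>
         g = \<one>\<^bsub>G\<^esub> \<or> h = \<one>\<^bsub>G\<^esub> \<or> x = \<one>\<^bsub>X\<^esub> \<Longrightarrow> \<gamma> g h x = 1"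
  and \<mu>_normalized: "g \<in> carrier G \<Longrightarrow> x \<in> carrier X \<Longrightarrow> y \<in> carrier X \<Longrightarrow>
         g = \<one>\<^bsub>G\<^esub> \<or> x = \<one>\<^bsub>X\<^esub> \<or> y = \<one>\<^bsub>X\<^esub> \<Longrightarrow> \<mu> g x y = 1"
  and c_normalized: "x \<in> carrier X \<Longrightarrow> y \<in> carrier X \<Longrightarrow> x = \<one>\<^bsub>X\<^esub> \<or> y = \<one>\<^bsub>X\<^esub> \<Longrightarrow> c x y = 1"
  using normalized unfolding normalized_cocycle_def Let_def by metis+

lemma act_one: "h \<in> carrier G \<Longrightarrow> act h \<one>\<^bsub>X\<^esub> = \<one>\<^bsub>X\<^esub>"
  using act_hom[of h "\<one>\<^bsub>X\<^esub>" "\<one>\<^bsub>X\<^esub>"] act_closed[of h "\<one>\<^bsub>X\<^esub>"]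
  by (simp add: X.l_cancel_one')

lemma kernel_central:
  assumes "x \<in> carrier X" "d x = \<one>\<^bsub>G\<^esub>" "y \<in> carrier X"
  shows "x \<otimes>\<^bsub>X\<^esub> y \<otimes>\<^bsub>X\<^esub> inv\<^bsub>X\<^esub> x = y" and "y \<otimes>\<^bsub>X\<^esub> x \<otimes>\<^bsub>X\<^esub> inv\<^bsub>X\<^esub> y = x"
proof -
  show conj: "x \<otimes>\<^bsub>X\<^esub> y \<otimes>\<^bsub>X\<^esub> inv\<^bsub>X\<^esub> x = y"
    using act_d[of x y] act_id assms by simp
  then have "x \<otimes>\<^bsub>X\<^esub> y = y \<otimes>\<^bsub>X\<^esub> x"
    using assms by (metis X.inv_solve_right' X.m_closed)
  then have "y \<otimes>\<^bsub>X\<^esub> x \<otimes>\<^bsub>X\<^esub> inv\<^bsub>X\<^esub> y = x \<otimes>\<^bsub>X\<^esub> y \<otimes>\<^bsub>X\<^esub> inv\<^bsub>X\<^esub> y"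
    by simp
  also have "\<dots> = x"
    using assms by (simp add: X.m_assoc)
  finally show "y \<otimes>\<^bsub>X\<^esub> x \<otimes>\<^bsub>X\<^esub> inv\<^bsub>X\<^esub> y = x" .
qed

lemma is_eq_obj_induced:
  fixes N :: nat
  assumes z: "z \<in> carrier X" and enc: "bij_betw enc {..<N} (carrier G)"
  shows "is_eq_obj G X act \<gamma> ({..<N}, \<lambda>j. act (enc j) z,
           \<lambda>h. monomial_mat enc (\<lambda>g. h \<otimes>\<^bsub>G\<^esub> g) (\<lambda>g. 1 / \<gamma> h g z))"
proof (rule is_eq_obj_monomial[OF G.is_group enc])
  fix g h s assume g: "g \<in> carrier G" and h: "h \<in> carrier G" and s: "s \<in> carrier G"
  have "\<gamma> h s z * \<gamma> g (h \<otimes>\<^bsub>G\<^esub> s) z = \<gamma> (g \<otimes>\<^bsub>G\<^esub> h) s z * \<gamma> g h (act s z)"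
    using \<gamma>_cocycle g h s z by blast
  then show "1 / \<gamma> (g \<otimes>\<^bsub>G\<^esub> h) s z = 1 / \<gamma> g (h \<otimes>\<^bsub>G\<^esub> s) z * (1 / \<gamma> h s z) * \<gamma> g h (act s z)"
    using g h s z \<gamma>_nonzero act_closed by (simp add: field_simps)
qed (use z act_closed act_mult \<gamma>_nonzero G.m_assoc in auto)

text \<open>The test object is induced from the one-dimensional space in degree \<open>z\<close>; the diagonal entry
  of its \<open>u\<^sub>g\<close> at the basis vector indexed by \<open>\<one>\<close> is \<open>1\<close> if \<open>g = \<one>\<close> and \<open>0\<close> otherwise, which
  produces the last factor.\<close>
lemma transparent_braiding:
  assumes obj: "is_eq_obj G X act \<gamma> (B, deg, u)" and Y: "transparent G X act d \<gamma> c (B, deg, u)"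
    and z: "z \<in> carrier X" and "a1 \<in> B" "a2 \<in> B"
  shows "c z (deg a2) * u (d z) a1 a2 * c (deg a2) z * (if d (deg a2) = \<one>\<^bsub>G\<^esub> then 1 else 0)
           = (if a1 = a2 then 1 else 0)"
proof -
  obtain enc and N :: nat where enc: "bij_betw enc {..<N} (carrier G)"
    using ex_bij_betw_nat_finite[OF finite_carrier_G] by (auto simp: atLeast0LessThan)
  let ?uZ = "\<lambda>h. monomial_mat enc (\<lambda>g. h \<otimes>\<^bsub>G\<^esub> g) (\<lambda>g. 1 / \<gamma> h g z)"
  have "double_braid_id d c (B, deg, u) ({..<N}, \<lambda>j. act (enc j) z, ?uZ)"
    using Y is_eq_obj_induced[OF z enc] unfolding transparent_def by blast
  moreover have "finite B" using obj by (simp add: is_eq_obj_def)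
  moreover define i where "i = inv_into {..<N} enc \<one>\<^bsub>G\<^esub>"
  have i: "i < N" "enc i = \<one>\<^bsub>G\<^esub>"
    using enc unfolding i_def by (metis G.one_closed bij_betw_def bij_betw_inv_into_right inv_into_into lessThan_iff)+
  ultimately have "c (act (enc i) z) (deg a2) * u (d (act (enc i) z)) a1 a2
      * (c (deg a2) (act (enc i) z) * ?uZ (d (deg a2)) i i) = (if a1 = a2 \<and> i = i then 1 else 0)"
    using \<open>a1 \<in> B\<close> \<open>a2 \<in> B\<close> unfolding double_braid_id_iff[OF \<open>finite B\<close> finite_lessThan] by blast
  then have "c z (deg a2) * u (d z) a1 a2 * (c (deg a2) z * ?uZ (d (deg a2)) i i)
      = (if a1 = a2 then 1 else 0)"
    using i z by (simp add: act_id)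
  moreover have "?uZ (d (deg a2)) i i = (if d (deg a2) = \<one>\<^bsub>G\<^esub> then 1 else 0)"
    using obj \<open>a2 \<in> B\<close> i z \<gamma>_normalized by (auto simp: monomial_mat_def is_eq_obj_def)
  ultimately show ?thesis by (simp add: mult.assoc)
qed

lemma eq_cat_nondegenerate_if_nondegenerate:
  assumes surj: "d ` carrier X = carrier G" and nondeg: "nondegenerate_cocycle G X d c"
  shows "eq_cat_nondegenerate G X act d \<gamma> c"
proof (rule eq_cat_nondegenerateI)
  fix Y assume obj: "is_eq_obj G X act \<gamma> Y" and Y: "transparent G X act d \<gamma> c Y"
  obtain B deg u where Y_def: "Y = (B, deg, u)" by (cases Y)
  have fin: "finite B" and deg_closed: "\<And>a. a \<in> B \<Longrightarrow> deg a \<in> carrier X"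
    using obj by (simp_all add: Y_def is_eq_obj_def)
  note braiding = transparent_braiding[OF obj[unfolded Y_def] Y[unfolded Y_def]]
  have u_one: "u \<one>\<^bsub>G\<^esub> a a = 1" if "a \<in> B" for a
    using is_eq_obj_u_one[OF obj[unfolded Y_def] G.is_group] \<gamma>_normalized deg_closed that by simp
  have deg_kernel: "d (deg a) = \<one>\<^bsub>G\<^esub>" if a: "a \<in> B" for a
    using braiding[OF X.one_closed a a] c_normalized deg_closed[OF a] u_one[OF a]
    by (simp split: if_splits)
  have deg_one: "deg a = \<one>\<^bsub>X\<^esub>" if a: "a \<in> B" for a
  proof -
    have "c y (deg a) * c (deg a) y = 1" if "y \<in> carrier X" "d y = \<one>\<^bsub>G\<^esub>" for y
      using braiding[OF that(1) a a] that deg_kernel[OF a] u_one[OF a] by simp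
    then show ?thesis
      using nondeg deg_closed[OF a] deg_kernel[OF a] unfolding nondegenerate_cocycle_def Let_def by blast
  qed
  have u_id: "u g a1 a2 = (if a1 = a2 then 1 else 0)"
    if "g \<in> carrier G" "a1 \<in> B" "a2 \<in> B" for g a1 a2
  proof -
    obtain z where z: "z \<in> carrier X" "g = d z" using surj \<open>g \<in> carrier G\<close> by blast
    then show ?thesis
      using braiding[OF z(1) that(2,3)] deg_one[OF that(3)] c_normalized[OF z(1) X.one_closed]
        c_normalized[OF X.one_closed z(1)] d.hom_one by simp
  qed
  show "\<exists>n. eq_iso G Y (unit_sum X n)"
    unfolding Y_def by (rule exI, rule eq_iso_unit_sumI[OF fin]) (simp_all add: deg_one u_id)
qed

lemma transparent_if_kernel_degree:
  assumes fin: "finite B" and x: "x \<in> carrier X" "d x = \<one>\<^bsub>G\<^esub>"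
    and braiding: "\<And>z a1 a2. z \<in> carrier X \<Longrightarrow> a1 \<in> B \<Longrightarrow> a2 \<in> B \<Longrightarrow>
                     c z x * u (d z) a1 a2 * c x z = (if a1 = a2 then 1 else 0)"
  shows "transparent G X act d \<gamma> c (B, \<lambda>_. x, u)"
  unfolding transparent_def
proof (intro allI impI)
  fix Z assume obj: "is_eq_obj G X act \<gamma> Z"
  obtain BZ degZ uZ where Z_def: "Z = (BZ, degZ, uZ)" by (cases Z)
  have finZ: "finite BZ" and degZ: "\<And>b. b \<in> BZ \<Longrightarrow> degZ b \<in> carrier X"
    using obj by (simp_all add: Z_def is_eq_obj_def)
  have uZ: "uZ (d x) b1 b2 = (if b1 = b2 then 1 else 0)" if "b1 \<in> BZ" "b2 \<in> BZ" for b1 b2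
    using is_eq_obj_u_one[OF obj[unfolded Z_def] G.is_group] \<gamma>_normalized degZ that x by simp
  have off_diagonal: "u (d z) a1 a2 = 0" if "z \<in> carrier X" "a1 \<in> B" "a2 \<in> B" "a1 \<noteq> a2" for z a1 a2
    using braiding[OF that(1-3)] c_nonzero[OF that(1) x(1)] c_nonzero[OF x(1) that(1)] that(4) by simp
  have "double_braid_id d c (B, \<lambda>_. x, u) Z"
    unfolding Z_def double_braid_id_iff[OF fin finZ]
    using uZ braiding degZ off_diagonal by (auto simp: mult.assoc)
  moreover have "double_braid_id d c Z (B, \<lambda>_. x, u)"
    unfolding Z_def double_braid_id_iff[OF finZ fin]
    using uZ braiding[OF degZ] off_diagonal[OF degZ] by (auto simp: ac_simps)
  ultimately show "double_braid_id d c (B, \<lambda>_. x, u) Z \<and> double_braid_id d c Z (B, \<lambda>_. x, u)" ..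
qed

lemma lcos_d_image_invariant:
  assumes z: "z \<in> carrier X" and a: "a \<in> carrier G"
  shows "d z <#\<^bsub>G\<^esub> (a <#\<^bsub>G\<^esub> d ` carrier X) = a <#\<^bsub>G\<^esub> d ` carrier X"
proof -
  have D: "subgroup (d ` carrier X) G" by (rule d.img_is_subgroup)
  have "inv\<^bsub>G\<^esub> a \<otimes>\<^bsub>G\<^esub> (d z \<otimes>\<^bsub>G\<^esub> a) = d (act (inv\<^bsub>G\<^esub> a) z)"
    using a z d_act[of "inv\<^bsub>G\<^esub> a" z] by (simp add: G.m_assoc)
  then have "d z \<otimes>\<^bsub>G\<^esub> a \<in> a <#\<^bsub>G\<^esub> d ` carrier X"
    using a z act_closed by (intro subgroup.lcos_module_rev[OF D G.is_group]) auto
  then have "a <#\<^bsub>G\<^esub> d ` carrier X = (d z \<otimes>\<^bsub>G\<^esub> a) <#\<^bsub>G\<^esub> d ` carrier X"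
    using a D by (rule G.l_repr_independence)
  also have "\<dots> = d z <#\<^bsub>G\<^esub> (a <#\<^bsub>G\<^esub> d ` carrier X)"
    using a z D by (simp add: G.lcos_m_assoc subgroup.subset)
  finally show ?thesis ..
qed

lemma surjective_if_eq_cat_nondegenerate:
  assumes nondeg: "eq_cat_nondegenerate G X act d \<gamma> c"
  shows "d ` carrier X = carrier G"
proof -
  let ?D = "d ` carrier X"
  let ?S = "(\<lambda>a. a <#\<^bsub>G\<^esub> ?D) ` carrier G"
  have D: "subgroup ?D G" by (rule d.img_is_subgroup)
  then have D_sub: "?D \<subseteq> carrier G" by (rule subgroup.subset)
  obtain enc where enc: "bij_betw enc {..<card ?S} ?S"
    using ex_bij_betw_nat_finite[of ?S] finite_carrier_G by (auto simp: atLeast0LessThan)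
  let ?u = "\<lambda>h. monomial_mat enc (\<lambda>C. h <#\<^bsub>G\<^esub> C) (\<lambda>_. 1::'k)"
  let ?Q = "({..<card ?S}, \<lambda>_. \<one>\<^bsub>X\<^esub>, ?u)"
  have obj: "is_eq_obj G X act \<gamma> ?Q"
    by (rule is_eq_obj_monomial[OF G.is_group enc, where p="\<lambda>h C. h <#\<^bsub>G\<^esub> C"
          and \<delta>="\<lambda>_. \<one>\<^bsub>X\<^esub>" and lam="\<lambda>_ _. 1"])
      (use D_sub act_one \<gamma>_normalized in \<open>auto simp: G.lcos_m_assoc G.lcos_mult_one G.m_assoc\<close>)
  have "?u (d z) a1 a2 = (if a1 = a2 then 1 else 0)"
    if z: "z \<in> carrier X" and ij: "a1 < card ?S" "a2 < card ?S" for z a1 a2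
  proof -
    obtain a where "a \<in> carrier G" "enc a2 = a <#\<^bsub>G\<^esub> ?D"
      using bij_betwE[OF enc] ij(2) by blast
    then show ?thesis
      using z ij lcos_d_image_invariant by (intro monomial_mat_eq_id[OF enc]) simp_all
  qed
  then have "transparent G X act d \<gamma> c ?Q"
    using c_normalized by (intro transparent_if_kernel_degree) simp_all
  then obtain n where "eq_iso G ?Q (unit_sum X n)"
    using eq_cat_nondegenerateD[OF nondeg obj] by blast
  then have u_id: "\<forall>g\<in>carrier G. \<forall>i<card ?S. \<forall>k<card ?S. ?u g i k = (if i = k then 1 else 0)"
    using eq_iso_unit_sumD(2) by fastforce
  have "g \<in> ?D" if g: "g \<in> carrier G" for g
  proof -
    define i where "i = inv_into {..<card ?S} enc ?D"
    have "?D \<in> ?S" using D_sub by (auto intro!: image_eqI[of _ _ "\<one>\<^bsub>G\<^esub>"] simp: G.lcos_mult_one)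
    then have i: "i < card ?S" "enc i = ?D"
      using enc unfolding i_def by (metis bij_betw_def bij_betw_inv_into_right inv_into_into lessThan_iff)+
    then have "?u g i i = 1"
      using u_id g by simp
    then have "g <#\<^bsub>G\<^esub> ?D = ?D"
      using i by (simp add: monomial_mat_def split: if_splits)
    then show ?thesis using G.lcos_self[OF g D] by simp
  qed
  then show ?thesis using D_sub by blast
qed

lemma monodromy_mult:
  assumes x: "x \<in> carrier X" "d x = \<one>\<^bsub>G\<^esub>" and z: "z \<in> carrier X" and w: "w \<in> carrier X"
  shows "c (z \<otimes>\<^bsub>X\<^esub> w) x * c x (z \<otimes>\<^bsub>X\<^esub> w) * \<gamma> (d z) (d w) x = c z x * c x z * (c w x * c x w)"
proof -
  have left: "c (z \<otimes>\<^bsub>X\<^esub> w) x = \<omega> z w x * \<omega> x z w / (\<omega> z x w * \<gamma> (d z) (d w) x) * c z x * c w x"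
    using c_mult_left[OF z w x(1)] kernel_central[OF x] z w by simp
  have right: "c x (z \<otimes>\<^bsub>X\<^esub> w) = \<omega> z x w / (\<omega> x z w * \<omega> z w x) * c x z * c x w"
    using c_mult_right[OF x(1) z w] kernel_central[OF x] \<mu>_normalized z w x by simp
  have "\<omega> z w x \<noteq> 0" "\<omega> x z w \<noteq> 0" "\<omega> z x w \<noteq> 0" "\<gamma> (d z) (d w) x \<noteq> 0"
    using \<omega>_nonzero \<gamma>_nonzero x z w by auto
  then show ?thesis unfolding left right by (simp add: field_simps)
qed

lemma act_kernel:
  assumes surj: "d ` carrier X = carrier G" and x: "x \<in> carrier X" "d x = \<one>\<^bsub>G\<^esub>"
    and g: "g \<in> carrier G"
  shows "act g x = x"
proof -
  obtain v where "v \<in> carrier X" "g = d v" using surj g by blast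
  then show ?thesis using act_d kernel_central[OF x] x by simp
qed

text \<open>\<open>\<lambda>(\<partial> z) = (c(z,x) c(x,z))\<inverse>\<close> is well defined because \<open>x\<close> lies in the radical, and
  \<open>monodromy_mult\<close> turns it into a \<open>\<gamma>(-,-,x)\<close>-twisted character of \<open>G\<close>.\<close>
lemma radical_twisted_character:
  assumes surj: "d ` carrier X = carrier G" and x: "x \<in> carrier X" "d x = \<one>\<^bsub>G\<^esub>"
    and radical: "\<And>y. y \<in> carrier X \<Longrightarrow> d y = \<one>\<^bsub>G\<^esub> \<Longrightarrow> c y x * c x y = 1"
  obtains lam where "\<And>z. z \<in> carrier X \<Longrightarrow> c z x * lam (d z) * c x z = 1"
    and "\<And>g. g \<in> carrier G \<Longrightarrow> lam g \<noteq> 0"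
    and "\<And>g h. g \<in> carrier G \<Longrightarrow> h \<in> carrier G \<Longrightarrow> lam (g \<otimes>\<^bsub>G\<^esub> h) = lam g * lam h * \<gamma> g h x"
proof -
  define \<beta> where "\<beta> z = c z x * c x z" for z
  have \<beta>_nonzero: "\<beta> z \<noteq> 0" if "z \<in> carrier X" for z
    using c_nonzero that x by (simp add: \<beta>_def)
  have \<beta>_mult: "\<beta> (z \<otimes>\<^bsub>X\<^esub> w) * \<gamma> (d z) (d w) x = \<beta> z * \<beta> w"
    if "z \<in> carrier X" "w \<in> carrier X" for z w
    using monodromy_mult[OF x that] by (simp add: \<beta>_def)
  define lam where "lam g = 1 / \<beta> (SOME z. z \<in> carrier X \<and> d z = g)" for g
  have lam_d: "lam (d z) = 1 / \<beta> z" if z: "z \<in> carrier X" for z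
  proof -
    define z' where "z' = (SOME z'. z' \<in> carrier X \<and> d z' = d z)"
    have z': "z' \<in> carrier X" "d z' = d z"
      unfolding z'_def using someI[of "\<lambda>z'. z' \<in> carrier X \<and> d z' = d z" z] z by auto
    define k where "k = inv\<^bsub>X\<^esub> z \<otimes>\<^bsub>X\<^esub> z'"
    have k: "k \<in> carrier X" "d k = \<one>\<^bsub>G\<^esub>" "z \<otimes>\<^bsub>X\<^esub> k = z'"
      unfolding k_def using z z' by (simp_all add: X.m_assoc[symmetric])
    have "\<beta> k = 1" "\<gamma> (d z) (d k) x = 1"
      using radical[OF k(1,2)] \<gamma>_normalized z k x by (simp_all add: \<beta>_def)
    then have "\<beta> z' = \<beta> z"
      using \<beta>_mult[OF z k(1)] k(3) by simp
    then show ?thesis unfolding lam_def z'_def[symmetric] by simp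
  qed
  show ?thesis
  proof
    show "c z x * lam (d z) * c x z = 1" if "z \<in> carrier X" for z
    proof -
      have "c z x * lam (d z) * c x z = \<beta> z * lam (d z)"
        by (simp add: \<beta>_def ac_simps)
      then show ?thesis using lam_d[OF that] \<beta>_nonzero[OF that] by simp
    qed
    show "lam g \<noteq> 0" if g: "g \<in> carrier G" for g
    proof -
      obtain v where "v \<in> carrier X" "g = d v" using g surj by blast
      then show ?thesis using lam_d \<beta>_nonzero by simp
    qed
    show "lam (g \<otimes>\<^bsub>G\<^esub> h) = lam g * lam h * \<gamma> g h x" if gh: "g \<in> carrier G" "h \<in> carrier G" for g h
    proof -
      obtain v w where v: "v \<in> carrier X" "g = d v" and w: "w \<in> carrier X" "h = d w"
        using gh surj by blast
      have "lam (g \<otimes>\<^bsub>G\<^esub> h) = 1 / \<beta> (v \<otimes>\<^bsub>X\<^esub> w)"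
        using lam_d[of "v \<otimes>\<^bsub>X\<^esub> w"] v w by simp
      also have "\<dots> = \<gamma> g h x / (\<beta> v * \<beta> w)"
      proof -
        have "\<beta> v * \<beta> w = \<beta> (v \<otimes>\<^bsub>X\<^esub> w) * \<gamma> g h x"
          using \<beta>_mult[OF v(1) w(1)] v w by simp
        then show ?thesis using \<gamma>_nonzero[OF gh x(1)] by simp
      qed
      also have "\<dots> = lam g * lam h * \<gamma> g h x"
        using lam_d v w by simp
      finally show ?thesis .
    qed
  qed
qed

lemma nondegenerate_cocycle_if_eq_cat_nondegenerate:
  assumes nondeg: "eq_cat_nondegenerate G X act d \<gamma> c" and surj: "d ` carrier X = carrier G"
  shows "nondegenerate_cocycle G X d c"
  unfolding nondegenerate_cocycle_def Let_def
proof (intro ballI impI)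
  fix x assume "x \<in> {x \<in> carrier X. d x = \<one>\<^bsub>G\<^esub>}"
    and radical: "\<forall>y\<in>{x \<in> carrier X. d x = \<one>\<^bsub>G\<^esub>}. c y x * c x y = 1"
  then have x: "x \<in> carrier X" "d x = \<one>\<^bsub>G\<^esub>" by auto
  obtain lam where braiding: "\<And>z. z \<in> carrier X \<Longrightarrow> c z x * lam (d z) * c x z = 1"
    and lam_nonzero: "\<And>g. g \<in> carrier G \<Longrightarrow> lam g \<noteq> 0"
    and lam_mult: "\<And>g h. g \<in> carrier G \<Longrightarrow> h \<in> carrier G \<Longrightarrow> lam (g \<otimes>\<^bsub>G\<^esub> h) = lam g * lam h * \<gamma> g h x"
    using radical_twisted_character[OF surj x] radical by auto
  let ?Y = "({..<1::nat}, \<lambda>_. x, \<lambda>h. monomial_mat (\<lambda>_. ()) (\<lambda>s. s) (\<lambda>_. lam h))"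
  have "bij_betw (\<lambda>_. ()) {..<1::nat} {()}"
    by (auto simp: bij_betw_def inj_on_def)
  then have obj: "is_eq_obj G X act \<gamma> ?Y"
    by (rule is_eq_obj_monomial[OF G.is_group, where p="\<lambda>_ s. s" and \<delta>="\<lambda>_. x" and lam="\<lambda>h _. lam h"])
      (use x act_kernel[OF surj x] lam_nonzero lam_mult in auto)
  have "c z x * monomial_mat (\<lambda>_. ()) (\<lambda>s. s) (\<lambda>_. lam (d z)) a1 a2 * c x z = (if a1 = a2 then 1 else 0)"
    if "z \<in> carrier X" "a1 \<in> {..<1}" "a2 \<in> {..<1}" for z a1 a2
    using braiding[OF that(1)] that(2,3) by (simp add: monomial_mat_def)
  then have "transparent G X act d \<gamma> c ?Y"
    by (rule transparent_if_kernel_degree[OF finite_lessThan x])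
  then obtain n where "eq_iso G ?Y (unit_sum X n)"
    using eq_cat_nondegenerateD[OF nondeg obj] by blast
  then have "\<forall>b\<in>{..<1::nat}. x = \<one>\<^bsub>X\<^esub>"
    by (rule eq_iso_unit_sumD(1)[OF _ finite_lessThan])
  then show "x = \<one>\<^bsub>X\<^esub>" by simp
qed

end

theorem proposition5p6:
  fixes G :: "('g, 'a) monoid_scheme" and X :: "('x, 'b) monoid_scheme"
    and act :: "'g \<Rightarrow> 'x \<Rightarrow> 'x" and d :: "'x \<Rightarrow> 'g"
    and \<omega> :: "'x \<Rightarrow> 'x \<Rightarrow> 'x \<Rightarrow> 'k::{alg_closed_field, field_char_0}"
    and \<gamma> :: "'g \<Rightarrow> 'g \<Rightarrow> 'x \<Rightarrow> 'k" and \<mu> :: "'g \<Rightarrow> 'x \<Rightarrow> 'x \<Rightarrow> 'k" and c :: "'x \<Rightarrow> 'x \<Rightarrow> 'k"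
  assumes "finite_crossed_module G X act d"
    and "quasi_abelian_3cocycle G X act d \<omega> \<gamma> \<mu> c"
    and "normalized_cocycle G X \<omega> \<gamma> \<mu> c"
  shows "eq_cat_nondegenerate G X act d \<gamma> c \<longleftrightarrow>
           d ` carrier X = carrier G \<and> nondegenerate_cocycle G X d c"
proof -
  interpret normalized_qa_cocycle G X act d \<omega> \<gamma> \<mu> c
    using assms by unfold_locales
  show ?thesis
    using surjective_if_eq_cat_nondegenerate nondegenerate_cocycle_if_eq_cat_nondegenerate
      eq_cat_nondegenerate_if_nondegenerate by blast
qed

end
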